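(* Let $-\infty\le a<b\le\infty$, let $\kappa,\varphi:(a,b)\to\mathbb C$ be measurable with $\kappa\in L^2(a,b)$ and $\mathbb 1_{(a,c)}\varphi\in L^2(a,b)$ for every $c\in(a,b)$. Choose $c_0:=a<c_1<c_2<\dots<b$ with $\|\mathbb 1_{(c_n,b)}\kappa\|^2=2^{-n}\|\kappa\|^2$, and set $J_n=(c_{n-1},c_n)$, $\omega_n=\|\mathbb 1_{J_n}\kappa\|\cdot\|\mathbb 1_{J_n}\varphi\|$. Then \[ \sup_{n\in\mathbb N}\omega_n<\infty\iff\limsup_{t\nearrow b}\|\mathbb 1_{(a,t)}\varphi\|\cdot\|\mathbb 1_{(t,b)}\kappa\|<\infty . \]
   Context: Norms are $L^2(a,b)$-norms; $\mathbb 1_E$ is the indicator function of $E$. *)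

theory Defs
  imports "HOL-Analysis.Analysis"
begin

definition ioo :: "ereal \<Rightarrow> ereal \<Rightarrow> real set" where
  "ioo a b = {x. a < ereal x \<and> ereal x < b}"

definition L2sq :: "real set \<Rightarrow> (real \<Rightarrow> complex) \<Rightarrow> ennreal" where
  "L2sq S f = (\<integral>\<^sup>+ x. indicator S x * ennreal ((cmod (f x))\<^sup>2) \<partial>lebesgue)"

definition in_L2 :: "real set \<Rightarrow> (real \<Rightarrow> complex) \<Rightarrow> bool" where
  "in_L2 S f \<longleftrightarrow> set_borel_measurable lebesgue S f \<and> L2sq S f < \<infinity>"

text \<open>L2 norm of the indicator of S times f (meaningful when finite).\<close>
definition L2norm :: "real set \<Rightarrow> (real \<Rightarrow> complex) \<Rightarrow> real" where
  "L2norm S f = sqrt (enn2real (L2sq S f))"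

end

theory Submission
  imports Defs
begin

(* Write T t = ||1_(t,b) kappa||^2 and P t = ||1_(a,t) phi||^2, so that T (c n) = 2^-n ||kappa||^2.
   Hence ||1_(J n) kappa||^2 >= T (c (n-1)) - T (c n) = 2^-n ||kappa||^2; if all omega n <= M this
   forces ||1_(J n) phi||^2 <= 2^n M^2 / ||kappa||^2, summing to P (c n) <= 2^(n+1) M^2 / ||kappa||^2,
   and for c m <= t < c (m+1) we get P t * T t <= P (c (m+1)) * T (c m) <= 4 M^2.
   Conversely ||1_(J n) kappa||^2 <= T (c (n-1)) = 2 T (c n) and ||1_(J n) phi||^2 <= P (c n), so
   omega n <= sqrt 2 * sqrt (P (c n) * T (c n)), which is bounded once c n is close to b; the
   remaining blocks lie in a fixed interval (a, r) with r < b, where phi has finite norm. *)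

lemma ioo_subset: "x' \<le> x \<Longrightarrow> y \<le> y' \<Longrightarrow> ioo x y \<subseteq> ioo x' y'"
  unfolding ioo_def by (auto intro: order.strict_trans1 order.strict_trans2)

lemma ioo_empty: "y \<le> x \<Longrightarrow> ioo x y = {}"
  unfolding ioo_def by auto

lemma sets_lebesgue_ioo [measurable]: "ioo x y \<in> sets lebesgue"
proof -
  have "{t. x < ereal t \<and> ereal t < y} \<in> sets borel" by measurable
  then show ?thesis unfolding ioo_def by auto
qed

lemma L2sq_mono: "S \<subseteq> S' \<Longrightarrow> L2sq S f \<le> L2sq S' f"
  unfolding L2sq_def by (intro nn_integral_mono) (auto simp: indicator_def)

lemma L2sq_restrict: "S \<subseteq> U \<Longrightarrow> L2sq S (\<lambda>x. indicator U x *\<^sub>R f x) = L2sq S f"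
  unfolding L2sq_def by (intro nn_integral_cong) (auto simp: indicator_def)

lemma L2sq_ioo_split:
  assumes "f \<in> borel_measurable lebesgue"
  shows "L2sq (ioo x z) f \<le> L2sq (ioo x y) f + L2sq (ioo y z) f"
proof -
  let ?g = "\<lambda>t. ennreal ((cmod (f t))\<^sup>2)"
  have "AE t in lebesgue. t \<noteq> real_of_ereal y"
    by (rule AE_completion) (rule AE_lborel_singleton)
  then have "AE t in lebesgue. indicator (ioo x z) t * ?g t \<le>
      indicator (ioo x y) t * ?g t + indicator (ioo y z) t * ?g t"
  proof eventually_elim
    case (elim t)
    then have "t \<in> ioo x z \<Longrightarrow> t \<in> ioo x y \<or> t \<in> ioo y z"
      by (cases y) (auto simp: ioo_def)
    then show ?case by (auto simp: indicator_def)
  qed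
  then have "L2sq (ioo x z) f \<le> (\<integral>\<^sup>+ t. indicator (ioo x y) t * ?g t + indicator (ioo y z) t * ?g t \<partial>lebesgue)"
    unfolding L2sq_def by (rule nn_integral_mono_AE)
  also have "\<dots> = L2sq (ioo x y) f + L2sq (ioo y z) f"
    unfolding L2sq_def using assms by (intro nn_integral_add) auto
  finally show ?thesis .
qed

lemma L2norm_nonneg [simp]: "0 \<le> L2norm S f"
  unfolding L2norm_def by simp

lemma L2norm_power2: "L2norm S f ^ 2 = enn2real (L2sq S f)"
  unfolding L2norm_def by simp

lemma L2norm_empty [simp]: "L2norm {} f = 0"
  unfolding L2norm_def L2sq_def by simp

lemma L2norm_mono: "S \<subseteq> S' \<Longrightarrow> L2sq S' f < \<infinity> \<Longrightarrow> L2norm S f \<le> L2norm S' f"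
  unfolding L2norm_def by (intro real_sqrt_le_mono enn2real_mono L2sq_mono) auto

lemma L2norm_power2_ioo_split:
  assumes f: "set_borel_measurable lebesgue (ioo x z) f" and fin: "L2sq (ioo x z) f < \<infinity>"
    and "x \<le> y" "y \<le> z"
  shows "L2norm (ioo x z) f ^ 2 \<le> L2norm (ioo x y) f ^ 2 + L2norm (ioo y z) f ^ 2"
proof -
  have sub: "ioo x y \<subseteq> ioo x z" "ioo y z \<subseteq> ioo x z"
    using assms(3,4) by (simp_all add: ioo_subset)
  have "L2sq (ioo x z) f \<le> L2sq (ioo x y) f + L2sq (ioo y z) f"
    using L2sq_ioo_split[OF f[unfolded set_borel_measurable_def], of x z y]
    by (simp add: L2sq_restrict sub)
  moreover have fin': "L2sq (ioo x y) f < \<infinity>" "L2sq (ioo y z) f < \<infinity>"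
    using L2sq_mono[OF sub(1), of f] L2sq_mono[OF sub(2), of f] fin by auto
  ultimately have "enn2real (L2sq (ioo x z) f) \<le> enn2real (L2sq (ioo x y) f + L2sq (ioo y z) f)"
    by (intro enn2real_mono) auto
  then show ?thesis
    unfolding L2norm_power2 using fin' by (simp add: enn2real_plus)
qed

(* The block J (n+1) of the informal statement is ioo (c n) (c (Suc n)). *)
locale dyadic_blocks =
  fixes a b :: ereal and \<kappa> \<phi> :: "real \<Rightarrow> complex" and c :: "nat \<Rightarrow> ereal"
  assumes a_less_b: "a < b"
    and \<phi>_measurable: "set_borel_measurable lebesgue (ioo a b) \<phi>"
    and \<kappa>_L2: "in_L2 (ioo a b) \<kappa>"
    and \<phi>_L2_initial: "\<And>t::real. a < ereal t \<Longrightarrow> ereal t < b \<Longrightarrow> in_L2 (ioo a (ereal t)) \<phi>"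
    and c_0: "c 0 = a"
    and c_strict_mono: "strict_mono c"
    and c_less_b: "\<And>n. c n < b"
    and \<kappa>_tail_c: "\<And>n. L2norm (ioo (c n) b) \<kappa> ^ 2 = (1/2) ^ n * L2norm (ioo a b) \<kappa> ^ 2"
begin

lemma c_mono: "m \<le> n \<Longrightarrow> c m \<le> c n"
  using c_strict_mono by (simp add: strict_mono_less_eq)

lemma a_le_c: "a \<le> c n"
  using c_mono[of 0 n] c_0 by simp

lemma L2sq_\<kappa>_finite: "S \<subseteq> ioo a b \<Longrightarrow> L2sq S \<kappa> < \<infinity>"
  using L2sq_mono[of S "ioo a b" \<kappa>] \<kappa>_L2 unfolding in_L2_def by auto

lemma L2sq_\<phi>_finite: "z < b \<Longrightarrow> L2sq (ioo a z) \<phi> < \<infinity>"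
proof (cases "z \<le> a")
  case True
  then show ?thesis by (simp add: ioo_empty L2sq_def)
next
  case False
  moreover assume "z < b"
  ultimately obtain r where "z = ereal r" by (cases z) auto
  with False \<open>z < b\<close> show ?thesis using \<phi>_L2_initial[of r] unfolding in_L2_def by auto
qed

lemma \<kappa>_mono: "S \<subseteq> S' \<Longrightarrow> S' \<subseteq> ioo a b \<Longrightarrow> L2norm S \<kappa> \<le> L2norm S' \<kappa>"
  by (intro L2norm_mono L2sq_\<kappa>_finite)

lemma \<phi>_mono: "S \<subseteq> ioo a z \<Longrightarrow> z < b \<Longrightarrow> L2norm S \<phi> \<le> L2norm (ioo a z) \<phi>"
  by (intro L2norm_mono L2sq_\<phi>_finite)

lemma \<kappa>_split:
  assumes "a \<le> x" "x \<le> y" "y \<le> z" "z \<le> b"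
  shows "L2norm (ioo x z) \<kappa> ^ 2 \<le> L2norm (ioo x y) \<kappa> ^ 2 + L2norm (ioo y z) \<kappa> ^ 2"
proof (rule L2norm_power2_ioo_split)
  have sub: "ioo x z \<subseteq> ioo a b" using assms by (simp add: ioo_subset)
  then show "set_borel_measurable lebesgue (ioo x z) \<kappa>"
    using \<kappa>_L2 unfolding in_L2_def by (auto intro: set_borel_measurable_subset[OF _ sets_lebesgue_ioo])
  show "L2sq (ioo x z) \<kappa> < \<infinity>" using sub by (rule L2sq_\<kappa>_finite)
qed (use assms in auto)

lemma \<phi>_split:
  assumes "a \<le> x" "x \<le> y" "y \<le> z" "z < b"
  shows "L2norm (ioo x z) \<phi> ^ 2 \<le> L2norm (ioo x y) \<phi> ^ 2 + L2norm (ioo y z) \<phi> ^ 2"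
proof (rule L2norm_power2_ioo_split)
  have sub: "ioo x z \<subseteq> ioo a z" "ioo a z \<subseteq> ioo a b" using assms by (simp_all add: ioo_subset)
  then show "set_borel_measurable lebesgue (ioo x z) \<phi>"
    by (intro set_borel_measurable_subset[OF \<phi>_measurable sets_lebesgue_ioo]) auto
  show "L2sq (ioo x z) \<phi> < \<infinity>"
    using L2sq_mono[OF sub(1), of \<phi>] L2sq_\<phi>_finite[OF assms(4)] by auto
qed (use assms in auto)

lemma \<kappa>_tail_Suc: "L2norm (ioo (c n) b) \<kappa> ^ 2 = 2 * L2norm (ioo (c (Suc n)) b) \<kappa> ^ 2"
  by (simp add: \<kappa>_tail_c)

lemma \<kappa>_block_lower:
  "(1/2) ^ Suc n * L2norm (ioo a b) \<kappa> ^ 2 \<le> L2norm (ioo (c n) (c (Suc n))) \<kappa> ^ 2"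
proof -
  have "L2norm (ioo (c n) b) \<kappa> ^ 2 \<le> L2norm (ioo (c n) (c (Suc n))) \<kappa> ^ 2 + L2norm (ioo (c (Suc n)) b) \<kappa> ^ 2"
    using a_le_c c_mono[of n "Suc n"] c_less_b by (intro \<kappa>_split) (auto intro: less_imp_le)
  then show ?thesis by (simp add: \<kappa>_tail_c)
qed

lemma \<kappa>_block_upper: "L2norm (ioo (c n) (c (Suc n))) \<kappa> \<le> sqrt 2 * L2norm (ioo (c (Suc n)) b) \<kappa>"
proof -
  have "L2norm (ioo (c n) (c (Suc n))) \<kappa> \<le> L2norm (ioo (c n) b) \<kappa>"
    using a_le_c c_less_b by (intro \<kappa>_mono ioo_subset) (auto intro: less_imp_le)
  also have "\<dots> = sqrt (L2norm (ioo (c n) b) \<kappa> ^ 2)" by simp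
  also have "\<dots> = sqrt 2 * L2norm (ioo (c (Suc n)) b) \<kappa>"
    by (subst \<kappa>_tail_Suc) (simp add: real_sqrt_mult)
  finally show ?thesis .
qed

lemma \<kappa>_tail_beyond_c:
  assumes "\<And>n. c n \<le> t" shows "L2norm (ioo t b) \<kappa> = 0"
proof -
  have bound: "L2norm (ioo t b) \<kappa> ^ 2 \<le> (1/2) ^ n * L2norm (ioo a b) \<kappa> ^ 2" for n
  proof -
    have "L2norm (ioo t b) \<kappa> \<le> L2norm (ioo (c n) b) \<kappa>"
      using assms a_le_c by (intro \<kappa>_mono ioo_subset) auto
    then show ?thesis unfolding \<kappa>_tail_c[symmetric] by (simp add: power_mono)
  qed
  have "(\<lambda>n. (1/2) ^ n * L2norm (ioo a b) \<kappa> ^ 2) \<longlonglongrightarrow> 0"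
    by (rule tendsto_mult_left_zero, rule LIMSEQ_realpow_zero) simp_all
  then have "L2norm (ioo t b) \<kappa> ^ 2 \<le> 0"
    by (rule LIMSEQ_le_const) (use bound in blast)
  then show ?thesis by simp
qed

lemma c_bracket: "a < t \<Longrightarrow> t < c n \<Longrightarrow> \<exists>m. c m \<le> t \<and> t < c (Suc m)"
proof (induction n)
  case 0
  then show ?case by (simp add: c_0)
next
  case (Suc n)
  show ?case
  proof (cases "t < c n")
    case True
    then show ?thesis using Suc by blast
  next
    case False
    then show ?thesis using Suc.prems(2) by (intro exI[of _ n]) simp
  qed
qed

lemma \<phi>_block_bound_if_blocks_bounded:
  assumes "L2norm (ioo (c n) (c (Suc n))) \<kappa> * L2norm (ioo (c n) (c (Suc n))) \<phi> \<le> M"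
    and K: "0 < L2norm (ioo a b) \<kappa>"
  shows "L2norm (ioo (c n) (c (Suc n))) \<phi> ^ 2 \<le> M ^ 2 * 2 ^ Suc n / L2norm (ioo a b) \<kappa> ^ 2"
proof -
  let ?A = "L2norm (ioo (c n) (c (Suc n))) \<kappa> ^ 2" and ?B = "L2norm (ioo (c n) (c (Suc n))) \<phi> ^ 2"
  have low: "(1/2) ^ Suc n * L2norm (ioo a b) \<kappa> ^ 2 \<le> ?A" by (rule \<kappa>_block_lower)
  moreover have pos: "0 < (1/2) ^ Suc n * L2norm (ioo a b) \<kappa> ^ 2" using K by simp
  ultimately have "0 < ?A" by linarith
  have "?A * ?B \<le> M ^ 2"
    using assms(1) by (simp add: power_mult_distrib[symmetric] power_mono)
  then have "?B \<le> M ^ 2 / ?A" using \<open>0 < ?A\<close> by (simp add: pos_le_divide_eq mult.commute)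
  also have "\<dots> \<le> M ^ 2 / ((1/2) ^ Suc n * L2norm (ioo a b) \<kappa> ^ 2)"
    using low pos \<open>0 < ?A\<close> by (intro divide_left_mono mult_pos_pos) auto
  also have "\<dots> = M ^ 2 * 2 ^ Suc n / L2norm (ioo a b) \<kappa> ^ 2"
    by (simp add: field_simps)
  finally show ?thesis .
qed

lemma \<phi>_initial_c_bound_if_blocks_bounded:
  assumes blocks: "\<And>n. L2norm (ioo (c n) (c (Suc n))) \<kappa> * L2norm (ioo (c n) (c (Suc n))) \<phi> \<le> M"
    and K: "0 < L2norm (ioo a b) \<kappa>"
  shows "L2norm (ioo a (c n)) \<phi> ^ 2 \<le> M ^ 2 * 2 ^ Suc n / L2norm (ioo a b) \<kappa> ^ 2"
proof (induction n)
  case 0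
  then show ?case by (simp add: c_0 ioo_empty)
next
  case (Suc n)
  have "L2norm (ioo a (c (Suc n))) \<phi> ^ 2
      \<le> L2norm (ioo a (c n)) \<phi> ^ 2 + L2norm (ioo (c n) (c (Suc n))) \<phi> ^ 2"
    using a_le_c c_mono[of n "Suc n"] c_less_b by (intro \<phi>_split) auto
  also have "\<dots> \<le> M ^ 2 * 2 ^ Suc n / L2norm (ioo a b) \<kappa> ^ 2 + M ^ 2 * 2 ^ Suc n / L2norm (ioo a b) \<kappa> ^ 2"
    using Suc.IH \<phi>_block_bound_if_blocks_bounded[OF blocks K] by (rule add_mono)
  also have "\<dots> = M ^ 2 * 2 ^ Suc (Suc n) / L2norm (ioo a b) \<kappa> ^ 2"
    by (simp add: field_simps)
  finally show ?case .
qed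

lemma product_bound_if_blocks_bounded:
  assumes blocks: "\<And>n. L2norm (ioo (c n) (c (Suc n))) \<kappa> * L2norm (ioo (c n) (c (Suc n))) \<phi> \<le> M"
    and t: "a < t" "t < b"
  shows "L2norm (ioo a t) \<phi> * L2norm (ioo t b) \<kappa> \<le> 2 * M"
proof -
  have "0 \<le> M" using blocks[of 0] by (meson L2norm_nonneg mult_nonneg_nonneg order_trans)
  consider "\<And>n. c n \<le> t" | m where "c m \<le> t" "t < c (Suc m)"
    using c_bracket[OF t(1)] by (meson not_le)
  then show ?thesis
  proof cases
    case 1
    then show ?thesis using \<open>0 \<le> M\<close> by (simp add: \<kappa>_tail_beyond_c)
  next
    case 2
    show ?thesis
    proof (cases "L2norm (ioo a b) \<kappa> = 0")
      case True
      have "L2norm (ioo t b) \<kappa> \<le> L2norm (ioo a b) \<kappa>"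
        using t by (intro \<kappa>_mono ioo_subset) auto
      then have "L2norm (ioo t b) \<kappa> = 0" using True by (intro antisym) simp_all
      then show ?thesis using \<open>0 \<le> M\<close> by simp
    next
      case False
      then have K: "0 < L2norm (ioo a b) \<kappa>" using L2norm_nonneg[of "ioo a b" \<kappa>] by linarith
      have "L2norm (ioo t b) \<kappa> \<le> L2norm (ioo (c m) b) \<kappa>"
        using 2 a_le_c by (intro \<kappa>_mono ioo_subset) auto
      then have T: "L2norm (ioo t b) \<kappa> ^ 2 \<le> (1/2) ^ m * L2norm (ioo a b) \<kappa> ^ 2"
        unfolding \<kappa>_tail_c[symmetric] by (simp add: power_mono)
      have "L2norm (ioo a t) \<phi> \<le> L2norm (ioo a (c (Suc m))) \<phi>"
        using 2 c_less_b by (intro \<phi>_mono ioo_subset) auto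
      then have P: "L2norm (ioo a t) \<phi> ^ 2 \<le> M ^ 2 * 2 ^ Suc (Suc m) / L2norm (ioo a b) \<kappa> ^ 2"
        using \<phi>_initial_c_bound_if_blocks_bounded[OF blocks K, of "Suc m"] by (meson L2norm_nonneg power_mono order_trans)
      have "(L2norm (ioo a t) \<phi> * L2norm (ioo t b) \<kappa>) ^ 2
          \<le> (M ^ 2 * 2 ^ Suc (Suc m) / L2norm (ioo a b) \<kappa> ^ 2) * ((1/2) ^ m * L2norm (ioo a b) \<kappa> ^ 2)"
        unfolding power_mult_distrib using P T by (intro mult_mono) auto
      also have "\<dots> = (2 * M) ^ 2"
        using K by (simp add: field_simps)
      finally show ?thesis by (rule power2_le_imp_le) (use \<open>0 \<le> M\<close> in simp)
    qed
  qed
qed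

lemma block_bound_if_product_bound:
  assumes product: "\<And>t. r < t \<Longrightarrow> t < b \<Longrightarrow> L2norm (ioo a t) \<phi> * L2norm (ioo t b) \<kappa> \<le> C"
    and "r < b"
  shows "L2norm (ioo (c n) (c (Suc n))) \<kappa> * L2norm (ioo (c n) (c (Suc n))) \<phi>
    \<le> max (sqrt 2 * C) (L2norm (ioo a b) \<kappa> * L2norm (ioo a r) \<phi>)"
proof (cases "r < c (Suc n)")
  case True
  have "L2norm (ioo (c n) (c (Suc n))) \<phi> \<le> L2norm (ioo a (c (Suc n))) \<phi>"
    using a_le_c c_less_b by (intro \<phi>_mono ioo_subset) auto
  then have "L2norm (ioo (c n) (c (Suc n))) \<kappa> * L2norm (ioo (c n) (c (Suc n))) \<phi>
      \<le> sqrt 2 * L2norm (ioo (c (Suc n)) b) \<kappa> * L2norm (ioo a (c (Suc n))) \<phi>"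
    using \<kappa>_block_upper by (intro mult_mono) auto
  also have "\<dots> \<le> sqrt 2 * C"
    using product[OF True c_less_b] by (simp add: mult.commute mult.left_commute)
  finally show ?thesis by simp
next
  case False
  have "L2norm (ioo (c n) (c (Suc n))) \<kappa> \<le> L2norm (ioo a b) \<kappa>"
    using a_le_c c_less_b by (intro \<kappa>_mono ioo_subset) (auto intro: less_imp_le)
  moreover have "L2norm (ioo (c n) (c (Suc n))) \<phi> \<le> L2norm (ioo a r) \<phi>"
    using False a_le_c \<open>r < b\<close> by (intro \<phi>_mono ioo_subset) auto
  ultimately have "L2norm (ioo (c n) (c (Suc n))) \<kappa> * L2norm (ioo (c n) (c (Suc n))) \<phi>
      \<le> L2norm (ioo a b) \<kappa> * L2norm (ioo a r) \<phi>"
    by (intro mult_mono) auto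
  then show ?thesis by simp
qed


lemma Limsup_product_finite_if_blocks_bounded:
  assumes "bdd_above (range (\<lambda>n. L2norm (ioo (c n) (c (Suc n))) \<kappa> * L2norm (ioo (c n) (c (Suc n))) \<phi>))"
  shows "Limsup (at_left b) (\<lambda>t. ereal (L2norm (ioo a t) \<phi> * L2norm (ioo t b) \<kappa>)) < \<infinity>"
proof -
  obtain M where "\<And>n. L2norm (ioo (c n) (c (Suc n))) \<kappa> * L2norm (ioo (c n) (c (Suc n))) \<phi> \<le> M"
    using assms by (auto simp: bdd_above_def)
  then have "eventually (\<lambda>t. ereal (L2norm (ioo a t) \<phi> * L2norm (ioo t b) \<kappa>) \<le> ereal (2 * M)) (at_left b)"
    unfolding eventually_at_left[OF a_less_b]
    using a_less_b by (auto intro!: product_bound_if_blocks_bounded)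
  then have "Limsup (at_left b) (\<lambda>t. ereal (L2norm (ioo a t) \<phi> * L2norm (ioo t b) \<kappa>)) \<le> ereal (2 * M)"
    by (rule Limsup_bounded)
  then show ?thesis by (auto simp: le_less_trans)
qed

lemma blocks_bounded_if_Limsup_product_finite:
  assumes "Limsup (at_left b) (\<lambda>t. ereal (L2norm (ioo a t) \<phi> * L2norm (ioo t b) \<kappa>)) < \<infinity>"
  shows "bdd_above (range (\<lambda>n. L2norm (ioo (c n) (c (Suc n))) \<kappa> * L2norm (ioo (c n) (c (Suc n))) \<phi>))"
proof -
  obtain C where "Limsup (at_left b) (\<lambda>t. ereal (L2norm (ioo a t) \<phi> * L2norm (ioo t b) \<kappa>)) < ereal C"
    using assms less_PInf_Ex_of_nat by auto
  then have "eventually (\<lambda>t. ereal (L2norm (ioo a t) \<phi> * L2norm (ioo t b) \<kappa>) < ereal C) (at_left b)"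
    by (rule Limsup_lessD)
  then obtain r where "r < b"
    and below: "\<And>t. r < t \<Longrightarrow> t < b \<Longrightarrow> ereal (L2norm (ioo a t) \<phi> * L2norm (ioo t b) \<kappa>) < ereal C"
    unfolding eventually_at_left[OF a_less_b] by blast
  have "L2norm (ioo a t) \<phi> * L2norm (ioo t b) \<kappa> \<le> C" if "r < t" "t < b" for t
    using below[OF that] by simp
  then have block_bound: "L2norm (ioo (c n) (c (Suc n))) \<kappa> * L2norm (ioo (c n) (c (Suc n))) \<phi>
      \<le> max (sqrt 2 * C) (L2norm (ioo a b) \<kappa> * L2norm (ioo a r) \<phi>)" for n
    by (rule block_bound_if_product_bound[OF _ \<open>r < b\<close>])
  show ?thesis by (rule bdd_aboveI2) (rule block_bound)
qed

end

theorem lemma5p3: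
  fixes a b :: ereal and \<kappa> \<phi> :: "real \<Rightarrow> complex" and c :: "nat \<Rightarrow> ereal"
  assumes "a < b"
    and "set_borel_measurable lebesgue (ioo a b) \<kappa>"
    and "set_borel_measurable lebesgue (ioo a b) \<phi>"
    and "in_L2 (ioo a b) \<kappa>"
    and "\<And>t::real. a < ereal t \<Longrightarrow> ereal t < b \<Longrightarrow> in_L2 (ioo a (ereal t)) \<phi>"
    and "c 0 = a"
    and "strict_mono c"
    and "\<And>n. c n < b"
    and "\<And>n. L2norm (ioo (c n) b) \<kappa> ^ 2 = (1/2) ^ n * L2norm (ioo a b) \<kappa> ^ 2"
  shows "bdd_above ((\<lambda>n. L2norm (ioo (c (n - 1)) (c n)) \<kappa> * L2norm (ioo (c (n - 1)) (c n)) \<phi>) ` {1..})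
     \<longleftrightarrow> Limsup (at_left b) (\<lambda>t. ereal (L2norm (ioo a t) \<phi> * L2norm (ioo t b) \<kappa>)) < \<infinity>"
proof -
  interpret dyadic_blocks a b \<kappa> \<phi> c
    using assms(1,3-9) by unfold_locales
  have "(\<lambda>n. L2norm (ioo (c (n - 1)) (c n)) \<kappa> * L2norm (ioo (c (n - 1)) (c n)) \<phi>) ` {1..}
      = range (\<lambda>n. L2norm (ioo (c n) (c (Suc n))) \<kappa> * L2norm (ioo (c n) (c (Suc n))) \<phi>)"
    by (force simp: image_iff Suc_le_eq gr0_conv_Suc)
  then show ?thesis
    using Limsup_product_finite_if_blocks_bounded blocks_bounded_if_Limsup_product_finite by auto
qed

end
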